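(* Let $H_1,H_2,H_3,H_4$ be the following graphs. $H_1$: vertices $v_1,\dots,v_5$, edges $v_1v_2,v_2v_3,v_3v_4,v_4v_5,v_5v_1,v_2v_4,v_3v_5$. $H_2$: vertices $v_1,\dots,v_6$, edges $v_1v_2,v_2v_3,v_3v_4,v_4v_5,v_5v_6,v_6v_1,v_2v_5,v_3v_6$. $H_3$: vertices $v_1,\dots,v_7$, edges $v_1v_2,\dots,v_6v_7,v_7v_1$ (the $7$-cycle) together with $v_2v_5,v_3v_6,v_4v_7$. $H_4$: vertices $v_1,\dots,v_6$, edges $v_1v_2,v_2v_3,v_3v_4,v_4v_5,v_5v_6,v_6v_1,v_2v_6,v_3v_5$. Let $G$ be a cubic graph containing $H_i$ as an induced subgraph, for some $1\le i\le 4$. Then any minimum $2$-conversion set of $G$ contains exactly $2$ vertices from each copy of $H_i$.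
   Context: For a graph $G=(V,E)$ and a set $S_0\subseteq V$, the irreversible $2$-threshold conversion process is defined by: for $t=1,2,\dots$, $S_t$ is obtained from $S_{t-1}$ by adjoining all vertices having at least $2$ neighbours in $S_{t-1}$. $S_0$ is a $2$-conversion set if $S_t=V$ for some $t\ge 0$; a minimum $2$-conversion set is one of smallest size. *)

theory Defs
  imports Main
begin

definition simple_graph :: "'a set \<Rightarrow> ('a \<Rightarrow> 'a \<Rightarrow> bool) \<Rightarrow> bool" where
  "simple_graph V E \<longleftrightarrow> finite V \<and> (\<forall>u v. E u v \<longrightarrow> u \<in> V \<and> v \<in> V)
     \<and> (\<forall>u v. E u v \<longrightarrow> E v u) \<and> (\<forall>v. \<not> E v v)"

definition cubic_graph :: "'a set \<Rightarrow> ('a \<Rightarrow> 'a \<Rightarrow> bool) \<Rightarrow> bool" where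
  "cubic_graph V E \<longleftrightarrow> simple_graph V E \<and> (\<forall>v\<in>V. card {u. E v u} = 3)"

definition conv_step :: "'a set \<Rightarrow> ('a \<Rightarrow> 'a \<Rightarrow> bool) \<Rightarrow> 'a set \<Rightarrow> 'a set" where
  "conv_step V E S = S \<union> {v \<in> V. card {u \<in> S. E v u} \<ge> 2}"

definition conversion_set :: "'a set \<Rightarrow> ('a \<Rightarrow> 'a \<Rightarrow> bool) \<Rightarrow> 'a set \<Rightarrow> bool" where
  "conversion_set V E S \<longleftrightarrow> S \<subseteq> V \<and> (\<exists>t. (conv_step V E ^^ t) S = V)"

definition min_conversion_set :: "'a set \<Rightarrow> ('a \<Rightarrow> 'a \<Rightarrow> bool) \<Rightarrow> 'a set \<Rightarrow> bool" where
  "min_conversion_set V E S \<longleftrightarrow> conversion_set V E S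
     \<and> (\<forall>T. conversion_set V E T \<longrightarrow> card S \<le> card T)"

text \<open>Small pattern graphs on vertices 1..n given by edge lists.\<close>
definition H_n :: "nat \<Rightarrow> nat" where
  "H_n i = (if i = 1 then 5 else if i = 2 then 6 else if i = 3 then 7 else 6)"

definition H_edges :: "nat \<Rightarrow> (nat \<times> nat) list" where
  "H_edges i =
    (if i = 1 then [(1,2),(2,3),(3,4),(4,5),(5,1),(2,4),(3,5)]
     else if i = 2 then [(1,2),(2,3),(3,4),(4,5),(5,6),(6,1),(2,5),(3,6)]
     else if i = 3 then [(1,2),(2,3),(3,4),(4,5),(5,6),(6,7),(7,1),(2,5),(3,6),(4,7)]
     else [(1,2),(2,3),(3,4),(4,5),(5,6),(6,1),(2,6),(3,5)])"

definition H_adj :: "nat \<Rightarrow> nat \<Rightarrow> nat \<Rightarrow> bool" where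
  "H_adj i a b \<longleftrightarrow> (a, b) \<in> set (H_edges i) \<or> (b, a) \<in> set (H_edges i)"

definition induced_copy :: "'a set \<Rightarrow> ('a \<Rightarrow> 'a \<Rightarrow> bool) \<Rightarrow> nat \<Rightarrow> (nat \<Rightarrow> 'a) \<Rightarrow> bool" where
  "induced_copy V E i f \<longleftrightarrow> inj_on f {1..H_n i} \<and> f ` {1..H_n i} \<subseteq> V
     \<and> (\<forall>a\<in>{1..H_n i}. \<forall>b\<in>{1..H_n i}. E (f a) (f b) \<longleftrightarrow> H_adj i a b)"

end

theory Submission
  imports Defs
begin

text \<open>
  S is a 2-conversion set of a finite graph iff it meets every nonempty vertex set C in which each
  vertex has at most one neighbour outside C: no vertex of such a C can be the first of C to be
  converted, and conversely the vertices that are never converted form such a set. In a cubic graph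
  every vertex set inducing minimum degree at least 2 is of this kind. Each H_i has a family of such
  sets with empty intersection, so a conversion set has at least two vertices in every copy of H_i.
  Conversely, H_i has a 2-conversion set of two vertices; by the criterion, replacing the part of S
  inside a copy of H_i by such a pair again yields a conversion set, so minimality of S bounds that
  part by 2.
\<close>

definition blocking_set :: "'a set \<Rightarrow> ('a \<Rightarrow> 'a \<Rightarrow> bool) \<Rightarrow> 'a set \<Rightarrow> bool" where
  "blocking_set V E C \<longleftrightarrow> C \<noteq> {} \<and> C \<subseteq> V \<and> (\<forall>v\<in>C. card {u \<in> V - C. E v u} \<le> 1)"

definition min_degree_two :: "('a \<Rightarrow> 'a \<Rightarrow> bool) \<Rightarrow> 'a set \<Rightarrow> bool" where
  "min_degree_two E D \<longleftrightarrow> (\<forall>v\<in>D. 2 \<le> card {u \<in> D. E v u})"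

definition graph_embedding ::
    "'b set \<Rightarrow> ('b \<Rightarrow> 'b \<Rightarrow> bool) \<Rightarrow> 'a set \<Rightarrow> ('a \<Rightarrow> 'a \<Rightarrow> bool) \<Rightarrow> ('b \<Rightarrow> 'a) \<Rightarrow> bool" where
  "graph_embedding W F V E f \<longleftrightarrow>
     inj_on f W \<and> f ` W \<subseteq> V \<and> (\<forall>a\<in>W. \<forall>b\<in>W. F a b \<longrightarrow> E (f a) (f b))"

lemma graph_embedding_finite:
  "graph_embedding W F V E f \<Longrightarrow> finite V \<Longrightarrow> finite W"
  unfolding graph_embedding_def by (metis finite_imageD finite_subset)

lemma induced_copy_graph_embedding:
  "induced_copy V E i f \<Longrightarrow> graph_embedding {1..H_n i} (H_adj i) V E f"
  unfolding induced_copy_def graph_embedding_def by blast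

lemma conv_step_funpow_subset: "S \<subseteq> V \<Longrightarrow> (conv_step V E ^^ t) S \<subseteq> V"
  by (induction t) (auto simp: conv_step_def)

lemma subset_conv_step_funpow: "S \<subseteq> (conv_step V E ^^ t) S"
  by (induction t) (auto simp: conv_step_def)

lemma blocking_set_disjoint_conv_step_funpow:
  assumes "finite V" "S \<subseteq> V" "blocking_set V E C" "C \<inter> S = {}"
  shows "C \<inter> (conv_step V E ^^ t) S = {}"
proof (induction t)
  case 0
  then show ?case using assms(4) by simp
next
  case (Suc t)
  let ?X = "(conv_step V E ^^ t) S"
  have bound: "card {u \<in> ?X. E v u} \<le> 1" if "v \<in> C" for v
  proof -
    have "{u \<in> ?X. E v u} \<subseteq> {u \<in> V - C. E v u}"
      using Suc.IH conv_step_funpow_subset[OF assms(2)] by blast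
    then have "card {u \<in> ?X. E v u} \<le> card {u \<in> V - C. E v u}"
      using assms(1) by (intro card_mono) auto
    also have "\<dots> \<le> 1"
      using assms(3) that by (simp add: blocking_set_def)
    finally show ?thesis .
  qed
  have "v \<notin> conv_step V E ?X" if "v \<in> C" for v
  proof -
    have "v \<notin> ?X" using Suc.IH that by blast
    moreover have "\<not> 2 \<le> card {u \<in> ?X. E v u}" using bound[OF that] by simp
    ultimately show ?thesis by (simp add: conv_step_def)
  qed
  then show ?case by auto
qed

lemma blocking_set_meets_conversion_set:
  assumes "finite V" "conversion_set V E S" "blocking_set V E C"
  shows "C \<inter> S \<noteq> {}"
proof
  assume "C \<inter> S = {}"
  obtain t where "(conv_step V E ^^ t) S = V" and "S \<subseteq> V"
    using assms(2) by (auto simp: conversion_set_def)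
  with blocking_set_disjoint_conv_step_funpow[OF assms(1) _ assms(3) \<open>C \<inter> S = {}\<close>]
  have "C \<inter> V = {}" by metis
  then show False
    using assms(3) by (auto simp: blocking_set_def)
qed

lemma conv_step_funpow_fixpoint:
  assumes "finite V" "S \<subseteq> V"
  obtains t where "conv_step V E ((conv_step V E ^^ t) S) = (conv_step V E ^^ t) S"
proof -
  define F where "F t = (conv_step V E ^^ t) S" for t
  have F_Suc: "F (Suc t) = conv_step V E (F t)" for t
    by (simp add: F_def)
  have "range F \<subseteq> Pow V"
    using conv_step_funpow_subset[OF assms(2)] by (auto simp: F_def)
  then have "finite (range F)"
    using assms(1) by (simp add: finite_subset)
  moreover have "mono F"
    unfolding mono_iff_le_Suc F_Suc by (simp add: conv_step_def)
  moreover have "\<forall>n. F n = F (Suc n) \<longrightarrow> F (Suc n) = F (Suc (Suc n))"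
    by (metis F_Suc)
  ultimately obtain N where "\<forall>n\<ge>N. F N = F n"
    using finite_mono_remains_stable_implies_strict_prefix by blast
  then have "F (Suc N) = F N" by (metis le_Suc_eq order_refl)
  then have "conv_step V E (F N) = F N" by (simp only: F_Suc)
  then show thesis using that unfolding F_def by blast
qed

lemma conversion_setI:
  assumes "finite V" "S \<subseteq> V" and meets: "\<And>C. blocking_set V E C \<Longrightarrow> C \<inter> S \<noteq> {}"
  shows "conversion_set V E S"
proof -
  obtain t where fixpoint: "conv_step V E ((conv_step V E ^^ t) S) = (conv_step V E ^^ t) S"
    using conv_step_funpow_fixpoint[OF assms(1,2)] .
  let ?X = "(conv_step V E ^^ t) S"
  have XV: "?X \<subseteq> V"
    using conv_step_funpow_subset[OF assms(2)] .
  have "\<not> blocking_set V E (V - ?X)"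
    using meets subset_conv_step_funpow[where V = V and E = E and t = t] by blast
  moreover have "card {u \<in> V - (V - ?X). E v u} \<le> 1" if "v \<in> V - ?X" for v
  proof -
    have "v \<notin> conv_step V E ?X" using that fixpoint by simp
    then have "card {u \<in> ?X. E v u} < 2" using that by (auto simp: conv_step_def)
    moreover have "V - (V - ?X) = ?X" using XV by blast
    ultimately show ?thesis by simp
  qed
  ultimately have "?X = V"
    using XV by (auto simp: blocking_set_def)
  then show ?thesis
    using assms(2) by (auto simp: conversion_set_def)
qed

lemma blocking_set_if_min_degree_two:
  assumes "cubic_graph V E" "C \<noteq> {}" "C \<subseteq> V" "min_degree_two E C"
  shows "blocking_set V E C"
  unfolding blocking_set_def
proof (intro conjI ballI assms(2,3))
  fix v assume "v \<in> C"
  let ?In = "{u \<in> C. E v u}" and ?Out = "{u \<in> V - C. E v u}"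
  have three: "card {u. E v u} = 3"
    using assms(1,3) \<open>v \<in> C\<close> by (auto simp: cubic_graph_def)
  then have fin: "finite {u. E v u}"
    by (intro card_ge_0_finite) simp
  have "finite ?In" "finite ?Out"
    using fin by (auto intro: rev_finite_subset)
  then have "card ?In + card ?Out = card (?In \<union> ?Out)"
    by (intro card_Un_disjoint[symmetric]) auto
  also have "\<dots> \<le> card {u. E v u}"
    using fin by (intro card_mono) auto
  finally have "card ?In + card ?Out \<le> 3"
    using three by simp
  moreover have "2 \<le> card ?In"
    using assms(4) \<open>v \<in> C\<close> by (simp add: min_degree_two_def)
  ultimately show "card ?Out \<le> 1" by linarith
qed

lemma min_degree_two_image:
  assumes emb: "graph_embedding W F V E f" and "finite D" "D \<subseteq> W" "min_degree_two F D"
  shows "min_degree_two E (f ` D)"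
  unfolding min_degree_two_def
proof
  fix v assume "v \<in> f ` D"
  then obtain a where a: "a \<in> D" "v = f a" by blast
  have inj: "inj_on f {b \<in> D. F a b}"
    using emb \<open>D \<subseteq> W\<close> by (auto simp: graph_embedding_def elim: inj_on_subset)
  have "2 \<le> card {b \<in> D. F a b}"
    using assms(4) a(1) by (simp add: min_degree_two_def)
  also have "\<dots> = card (f ` {b \<in> D. F a b})"
    using inj by (simp add: card_image)
  also have "\<dots> \<le> card {u \<in> f ` D. E v u}"
    using emb a \<open>D \<subseteq> W\<close> \<open>finite D\<close> by (intro card_mono) (auto simp: graph_embedding_def)
  finally show "2 \<le> card {u \<in> f ` D. E v u}" .
qed

lemma blocking_set_preimage:
  assumes emb: "graph_embedding W F V E f" and "finite V" "blocking_set V E C" "C \<inter> f ` W \<noteq> {}"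
  shows "blocking_set W F {a \<in> W. f a \<in> C}"
  unfolding blocking_set_def
proof (intro conjI ballI)
  show "{a \<in> W. f a \<in> C} \<noteq> {}" using assms(4) by blast
  fix a assume a: "a \<in> {a \<in> W. f a \<in> C}"
  let ?N = "{b \<in> W - {a \<in> W. f a \<in> C}. F a b}"
  have "card ?N = card (f ` ?N)"
    using emb by (intro card_image[symmetric]) (auto simp: graph_embedding_def elim: inj_on_subset)
  also have "\<dots> \<le> card {u \<in> V - C. E (f a) u}"
    using emb a \<open>finite V\<close> by (intro card_mono) (auto simp: graph_embedding_def)
  also have "\<dots> \<le> 1"
    using assms(3) a by (simp add: blocking_set_def)
  finally show "card ?N \<le> 1" .
qed auto

lemma two_le_card_conversion_set_inter:
  assumes cubic: "cubic_graph V E" and conv: "conversion_set V E S"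
    and emb: "graph_embedding W F V E f"
    and cores: "\<forall>D\<in>\<D>. D \<noteq> {} \<and> D \<subseteq> W \<and> min_degree_two F D" and "\<Inter>\<D> = {}"
  shows "2 \<le> card (S \<inter> f ` W)"
proof -
  have finV: "finite V" using cubic by (simp add: cubic_graph_def simple_graph_def)
  have finW: "finite W" using graph_embedding_finite[OF emb finV] .
  let ?A = "{a \<in> W. f a \<in> S}"
  have meets: "D \<inter> ?A \<noteq> {}" if "D \<in> \<D>" for D
  proof -
    have D: "D \<noteq> {}" "D \<subseteq> W" "min_degree_two F D" using cores that by auto
    then have "finite D" using finW by (simp add: finite_subset)
    then have "blocking_set V E (f ` D)"
      using emb D
      by (intro blocking_set_if_min_degree_two[OF cubic] min_degree_two_image[OF emb])
         (auto simp: graph_embedding_def)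
    then have "f ` D \<inter> S \<noteq> {}"
      using blocking_set_meets_conversion_set[OF finV conv] by blast
    then show ?thesis using \<open>D \<subseteq> W\<close> by blast
  qed
  have "2 \<le> card ?A"
  proof (rule ccontr)
    assume "\<not> 2 \<le> card ?A"
    then have "\<forall>a\<in>?A. \<forall>b\<in>?A. a = b" using card_le_Suc0_iff_eq[of ?A] finW by simp
    then obtain j where "?A \<subseteq> {j}" by blast
    then have "j \<in> \<Inter>\<D>" using meets by blast
    then show False using \<open>\<Inter>\<D> = {}\<close> by blast
  qed
  also have "card ?A = card (f ` ?A)"
    using emb by (intro card_image[symmetric]) (auto simp: graph_embedding_def elim: inj_on_subset)
  also have "f ` ?A = S \<inter> f ` W" by blast
  finally show ?thesis .
qed

lemma conversion_set_exchange:
  assumes finV: "finite V" and conv: "conversion_set V E S"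
    and emb: "graph_embedding W F V E f" and convP: "conversion_set W F P"
  shows "conversion_set V E (S - f ` W \<union> f ` P)"
proof (rule conversion_setI[OF finV])
  have "S \<subseteq> V" "P \<subseteq> W" "f ` W \<subseteq> V"
    using conv convP emb by (simp_all add: conversion_set_def graph_embedding_def)
  then show "S - f ` W \<union> f ` P \<subseteq> V" by blast
  fix C assume C: "blocking_set V E C"
  show "C \<inter> (S - f ` W \<union> f ` P) \<noteq> {}"
  proof (cases "C \<inter> f ` W = {}")
    case True
    then show ?thesis
      using blocking_set_meets_conversion_set[OF finV conv C] by blast
  next
    case False
    have "blocking_set W F {a \<in> W. f a \<in> C}"
      using blocking_set_preimage[OF emb finV C False] .
    then have "{a \<in> W. f a \<in> C} \<inter> P \<noteq> {}"
      using blocking_set_meets_conversion_set[OF graph_embedding_finite[OF emb finV] convP] by blast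
    then show ?thesis by blast
  qed
qed

lemma card_min_conversion_set_inter_le:
  assumes finV: "finite V" and min: "min_conversion_set V E S"
    and emb: "graph_embedding W F V E f" and convP: "conversion_set W F P"
  shows "card (S \<inter> f ` W) \<le> card P"
proof -
  have conv: "conversion_set V E S" using min by (simp add: min_conversion_set_def)
  then have finS: "finite S" using finV by (auto simp: conversion_set_def elim: finite_subset)
  have finP: "finite P"
    using convP graph_embedding_finite[OF emb finV] by (auto simp: conversion_set_def elim: finite_subset)
  have "card S \<le> card (S - f ` W \<union> f ` P)"
    using min conversion_set_exchange[OF finV conv emb convP] by (simp add: min_conversion_set_def)
  also have "\<dots> \<le> card (S - f ` W) + card (f ` P)"
    by (rule card_Un_le)
  also have "\<dots> \<le> card S - card (S \<inter> f ` W) + card P"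
    using finS finP by (simp add: card_Diff_subset_Int card_image_le)
  moreover have "card (S \<inter> f ` W) \<le> card S"
    using finS by (intro card_mono) auto
  ultimately show ?thesis by linarith
qed

lemma H_min_degree_two_family:
  assumes "i \<in> {1..4}"
  shows "\<exists>\<D>. (\<forall>D\<in>\<D>. D \<noteq> {} \<and> D \<subseteq> {1..H_n i} \<and> min_degree_two (H_adj i) D) \<and> \<Inter>\<D> = {}"
proof -
  have "i = 1 \<or> i = 2 \<or> i = 3 \<or> i = 4" using assms by auto
  then show ?thesis
  proof (elim disjE)
    assume "i = 1"
    show ?thesis
      by (rule exI[of _ "{{2,3,4}, {3,4,5}, {1,2,3,5}, {1,2,4,5}}"])
         (auto simp: \<open>i = 1\<close> H_n_def; code_simp)
  next
    assume "i = 2"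
    show ?thesis
      by (rule exI[of _ "{{1,2,3,6}, {1,2,5,6}, {2,3,4,5}, {3,4,5,6}}"])
         (auto simp: \<open>i = 2\<close> H_n_def; code_simp)
  next
    assume "i = 3"
    show ?thesis
      by (rule exI[of _ "{{2,3,4,5}, {3,4,6,7}, {1,2,5,6,7}}"])
         (auto simp: \<open>i = 3\<close> H_n_def; code_simp)
  next
    assume "i = 4"
    show ?thesis
      by (rule exI[of _ "{{1,2,6}, {3,4,5}}"])
         (auto simp: \<open>i = 4\<close> H_n_def; code_simp)
  qed
qed

lemma H_conversion_pair:
  assumes "i \<in> {1..4}"
  shows "\<exists>P. card P = 2 \<and> conversion_set {1..H_n i} (H_adj i) P"
proof -
  have "conversion_set {1..H_n 1} (H_adj 1) {2,5}"
    and "conversion_set {1..H_n 2} (H_adj 2) {2,6}"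
    and "conversion_set {1..H_n 3} (H_adj 3) {3,5}"
    and "conversion_set {1..H_n 4} (H_adj 4) {2,5}"
    unfolding conversion_set_def by (intro conjI exI[of _ 3], simp add: H_n_def, code_simp)+
  moreover have "i = 1 \<or> i = 2 \<or> i = 3 \<or> i = 4" using assms by auto
  ultimately show ?thesis by (elim disjE) (auto intro!: exI)
qed

theorem lemma5p5:
  fixes V :: "'a set" and E :: "'a \<Rightarrow> 'a \<Rightarrow> bool" and i :: nat
    and f :: "nat \<Rightarrow> 'a" and S :: "'a set"
  assumes "cubic_graph V E"
    and "i \<in> {1..4}"
    and "induced_copy V E i f"
    and "min_conversion_set V E S"
  shows "card (S \<inter> f ` {1..H_n i}) = 2"
proof -
  have emb: "graph_embedding {1..H_n i} (H_adj i) V E f"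
    using induced_copy_graph_embedding[OF assms(3)] .
  have finV: "finite V"
    using assms(1) by (simp add: cubic_graph_def simple_graph_def)
  have conv: "conversion_set V E S"
    using assms(4) by (simp add: min_conversion_set_def)
  obtain \<D> where "\<forall>D\<in>\<D>. D \<noteq> {} \<and> D \<subseteq> {1..H_n i} \<and> min_degree_two (H_adj i) D" "\<Inter>\<D> = {}"
    using H_min_degree_two_family[OF assms(2)] by blast
  then have "2 \<le> card (S \<inter> f ` {1..H_n i})"
    by (rule two_le_card_conversion_set_inter[OF assms(1) conv emb])
  moreover obtain P where "card P = 2" "conversion_set {1..H_n i} (H_adj i) P"
    using H_conversion_pair[OF assms(2)] by blast
  then have "card (S \<inter> f ` {1..H_n i}) \<le> 2"
    using card_min_conversion_set_inter_le[OF finV assms(4) emb] by metis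
  ultimately show ?thesis by simp
qed

end
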